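(* Let $a\ge 2$ and $c\ge 2$ be even integers with $a\neq c$. Then $U=\{(a,-a),(c,-c)\}\subseteq\mathcal{B}$ is unavoidable.
   Context: The bicyclic inverse semigroup is $\mathcal{B}=\{(a,b)\in\mathbb{Z}\times\mathbb{Z}\mid a\ge 0,\ a+b\ge 0\}$ with multiplication $(a,b)(c,d)=(\max\{c+d,a\}-d,\ b+d)$. A subset $U\subseteq\mathcal{B}$ is called avoidable if $\mathcal{B}$ can be partitioned into two subsets $A$ and $B$ such that no element of $U$ can be written as a product $xy$ of two distinct elements $x\neq y$ both in $A$, or both in $B$. A set is unavoidable if it is not avoidable. *)

theory Defs
  imports Main
begin

definition bicyclic :: "(int \<times> int) set" where
  "bicyclic = {(a, b). a \<ge> 0 \<and> a + b \<ge> 0}"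

definition bmult :: "int \<times> int \<Rightarrow> int \<times> int \<Rightarrow> int \<times> int" where
  "bmult x y = (case x of (a, b) \<Rightarrow> case y of (c, d) \<Rightarrow> (max (c + d) a - d, b + d))"

definition avoidable :: "(int \<times> int) set \<Rightarrow> bool" where
  "avoidable U \<longleftrightarrow> (\<exists>A B. A \<union> B = bicyclic \<and> A \<inter> B = {} \<and>
     (\<forall>u\<in>U. \<forall>x y. x \<noteq> y \<and> ((x \<in> A \<and> y \<in> A) \<or> (x \<in> B \<and> y \<in> B)) \<longrightarrow> bmult x y \<noteq> u))"

definition unavoidable :: "(int \<times> int) set \<Rightarrow> bool" where
  "unavoidable U \<longleftrightarrow> \<not> avoidable U"

end

theory Submission
  imports Defs
begin

text \<open>A 2-colouring of \<open>\<B>\<close> must put two of any three elements into the same class. So \<open>U\<close> is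
  unavoidable as soon as three distinct elements \<open>x, y, z\<close> satisfy \<open>xy, xz, yz \<in> U\<close>. For
  \<open>a = 2h < c\<close> such a triangle is \<open>x = (c - h, h - c)\<close>, \<open>y = (h, -h)\<close>, \<open>z = (h + 1, -h)\<close>:
  here \<open>xy = xz = (c, -c)\<close> and \<open>yz = (a, -a)\<close>. Only the smaller of \<open>a, c\<close> has to be even.\<close>

lemma unavoidable_if_product_triangle:
  assumes "x \<in> bicyclic" "y \<in> bicyclic" "z \<in> bicyclic"
    and "x \<noteq> y" "x \<noteq> z" "y \<noteq> z"
    and "bmult x y \<in> U" "bmult x z \<in> U" "bmult y z \<in> U"
  shows "unavoidable U"
  unfolding unavoidable_def avoidable_def
proof
  assume "\<exists>A B. A \<union> B = bicyclic \<and> A \<inter> B = {} \<and>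
    (\<forall>u\<in>U. \<forall>x y. x \<noteq> y \<and> (x \<in> A \<and> y \<in> A \<or> x \<in> B \<and> y \<in> B) \<longrightarrow> bmult x y \<noteq> u)"
  then obtain A B where cover: "A \<union> B = bicyclic"
    and no_mono: "\<forall>u\<in>U. \<forall>x y. x \<noteq> y \<and> (x \<in> A \<and> y \<in> A \<or> x \<in> B \<and> y \<in> B) \<longrightarrow> bmult x y \<noteq> u"
    by blast
  have "\<not> (x \<in> A \<and> y \<in> A \<or> x \<in> B \<and> y \<in> B)"
    using no_mono \<open>bmult x y \<in> U\<close> \<open>x \<noteq> y\<close> by blast
  moreover have "\<not> (x \<in> A \<and> z \<in> A \<or> x \<in> B \<and> z \<in> B)"
    using no_mono \<open>bmult x z \<in> U\<close> \<open>x \<noteq> z\<close> by blast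
  moreover have "\<not> (y \<in> A \<and> z \<in> A \<or> y \<in> B \<and> z \<in> B)"
    using no_mono \<open>bmult y z \<in> U\<close> \<open>y \<noteq> z\<close> by blast
  moreover have "x \<in> A \<or> x \<in> B" "y \<in> A \<or> y \<in> B" "z \<in> A \<or> z \<in> B"
    using cover assms(1-3) by auto
  ultimately show False by blast
qed

lemma unavoidable_pair_even_less:
  fixes a c :: int
  assumes "a \<ge> 2" "even a" "a < c"
  shows "unavoidable {(a, -a), (c, -c)}"
proof -
  obtain h where h: "a = 2 * h" using \<open>even a\<close> by (auto elim: evenE)
  define x where "x = (c - h, h - c)"
  define y where "y = (h, -h)"
  define z where "z = (h + 1, -h)"
  show ?thesis
  proof (rule unavoidable_if_product_triangle[of x y z])
    show "x \<in> bicyclic" "y \<in> bicyclic" "z \<in> bicyclic"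
      unfolding x_def y_def z_def bicyclic_def using assms h by auto
    show "x \<noteq> y" "x \<noteq> z" "y \<noteq> z"
      unfolding x_def y_def z_def using assms h by auto
    show "bmult x y \<in> {(a, -a), (c, -c)}" "bmult x z \<in> {(a, -a), (c, -c)}"
      "bmult y z \<in> {(a, -a), (c, -c)}"
      unfolding x_def y_def z_def bmult_def using assms h by auto
  qed
qed

theorem corollary3p3:
  fixes a c :: int
  assumes "a \<ge> 2" and "c \<ge> 2" and "even a" and "even c" and "a \<noteq> c"
  shows "unavoidable {(a, -a), (c, -c)}"
proof (cases "a < c")
  case True
  then show ?thesis using unavoidable_pair_even_less assms by blast
next
  case False
  then have "unavoidable {(c, -c), (a, -a)}"
    using unavoidable_pair_even_less assms by simp
  then show ?thesis by (simp add: insert_commute)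
qed

end
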